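(* Fix an integer $k\geq1$ and $V=\{0,\ldots,k\}$. If a Boolean function $\varphi$ on $V$ satisfies $\mathrm{eul}(\varphi)=0$, then $\varphi\simeq\bot$.
   Context: A valuation is a subset $\nu\subseteq V$; $\nu^{(l)}$ is $\nu$ with membership of $l$ flipped. A Boolean function on $V$ is a map $\varphi:2^V\to\{\text{false},\text{true}\}$; $\mathrm{sat}(\varphi)$ is its set of satisfying valuations; $\mathrm{eul}(\varphi)=\sum_{\nu\in\mathrm{sat}(\varphi)}(-1)^{|\nu|}$; $\bot$ is the constant-false function. Write $\varphi\xrightarrow{+(\nu,l)}\varphi'$ if $\nu,\nu^{(l)}\notin\mathrm{sat}(\varphi)$ and $\mathrm{sat}(\varphi')=\mathrm{sat}(\varphi)\cup\{\nu,\nu^{(l)}\}$, and $\varphi\xrightarrow{-(\nu,l)}\varphi'$ if $\varphi'\xrightarrow{+(\nu,l)}\varphi$. Write $\varphi\xrightarrow{\pm}\varphi'$ if one of these holds for some $\nu,l$; $\simeq$ is the reflexive-transitive closure of $\xrightarrow{\pm}$ (an equivalence relation). *)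

theory Defs
  imports Main
begin

text \<open>Valuations over V are subsets of V; a Boolean function on V is a predicate on
  valuations, only its values on subsets of V matter (via sat).\<close>

definition flip :: "'a set \<Rightarrow> 'a \<Rightarrow> 'a set" where
  "flip \<nu> l = (if l \<in> \<nu> then \<nu> - {l} else insert l \<nu>)"

definition sat :: "'a set \<Rightarrow> ('a set \<Rightarrow> bool) \<Rightarrow> 'a set set" where
  "sat V \<phi> = {\<nu>. \<nu> \<subseteq> V \<and> \<phi> \<nu>}"

definition eul :: "'a set \<Rightarrow> ('a set \<Rightarrow> bool) \<Rightarrow> int" where
  "eul V \<phi> = (\<Sum>\<nu>\<in>sat V \<phi>. (-1) ^ card \<nu>)"

definition bot_fun :: "'a set \<Rightarrow> bool" where
  "bot_fun = (\<lambda>_. False)"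

definition plus_step :: "'a set \<Rightarrow> ('a set \<Rightarrow> bool) \<Rightarrow> 'a set \<Rightarrow> 'a
    \<Rightarrow> ('a set \<Rightarrow> bool) \<Rightarrow> bool" where
  "plus_step V \<phi> \<nu> l \<phi>' \<longleftrightarrow> \<nu> \<subseteq> V \<and> l \<in> V \<and>
     \<nu> \<notin> sat V \<phi> \<and> flip \<nu> l \<notin> sat V \<phi> \<and>
     sat V \<phi>' = sat V \<phi> \<union> {\<nu>, flip \<nu> l}"

definition pm_step :: "'a set \<Rightarrow> ('a set \<Rightarrow> bool) \<Rightarrow> ('a set \<Rightarrow> bool) \<Rightarrow> bool" where
  "pm_step V \<phi> \<phi>' \<longleftrightarrow> (\<exists>\<nu> l. plus_step V \<phi> \<nu> l \<phi>' \<or> plus_step V \<phi>' \<nu> l \<phi>)"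

definition equiv_bf :: "'a set \<Rightarrow> ('a set \<Rightarrow> bool) \<Rightarrow> ('a set \<Rightarrow> bool) \<Rightarrow> bool" where
  "equiv_bf V = (pm_step V)\<^sup>*\<^sup>*"

end

theory Submission
  imports Defs
begin

(* Every \<plusminus>-move adds or removes two valuations of opposite parity, so eul is invariant
   under \<simeq>. Conversely, induct on the number of satisfying valuations. If eul \<phi> = 0 and
   sat \<phi> is nonempty, it contains valuations a, b of opposite parity, i.e. with
   |a \<triangle> b| odd. Two moves through the intermediate valuation a^(i) replace a by
   a^(i)(j) for i, j \<in> a \<triangle> b (if a^(i)(j) is already satisfying, it takes over
   the role of a); this shrinks a \<triangle> b by two until it is a singleton {i}, and then
   the single move \<minus>(a,i) deletes the pair. An empty sat is joined to \<bottom> through the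
   function satisfied exactly by {} and {l}, as the two need not be equal as functions. *)

lemma flip_subset: "\<nu> \<subseteq> V \<Longrightarrow> l \<in> V \<Longrightarrow> flip \<nu> l \<subseteq> V"
  unfolding flip_def by auto

lemma flip_neq: "flip \<nu> l \<noteq> \<nu>"
  unfolding flip_def by auto

lemma flip_flip_neq: "i \<noteq> j \<Longrightarrow> flip (flip \<nu> i) j \<noteq> \<nu>"
  unfolding flip_def by auto

lemma sym_diff_flip: "sym_diff (flip a i) b = flip (sym_diff a b) i"
  unfolding flip_def by auto

lemma sym_diff_eq_singleton_imp_flip: "sym_diff a b = {i} \<Longrightarrow> b = flip a i"
  unfolding flip_def set_eq_iff by (metis Diff_iff Un_iff insert_iff empty_iff)

lemma neg_one_power_card_flip:
  assumes "finite \<nu>"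
  shows "(-1::int) ^ card (flip \<nu> l) = - ((-1) ^ card \<nu>)"
proof (cases "l \<in> \<nu>")
  case True
  then have "flip \<nu> l = \<nu> - {l}"
    by (simp add: flip_def)
  then have "card \<nu> = Suc (card (flip \<nu> l))"
    by (simp only: card_Suc_Diff1[OF assms True])
  then show ?thesis
    by simp
next
  case False
  with assms show ?thesis by (simp add: flip_def)
qed

lemma even_card_sym_diff_iff:
  assumes "finite a" "finite b"
  shows "even (card (sym_diff a b)) \<longleftrightarrow> even (card a + card b)"
proof -
  have "card (sym_diff a b) = card (a - b) + card (b - a)"
    using assms by (intro card_Un_disjoint) auto
  moreover have "card a = card (a \<inter> b) + card (a - b)" "card b = card (b \<inter> a) + card (b - a)"
    using assms by (simp_all only: card_Int_Diff)
  ultimately show ?thesis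
    by (simp add: Int_commute) presburger
qed

lemma sat_subset_Pow: "sat V \<phi> \<subseteq> Pow V"
  unfolding sat_def by auto

lemma finite_sat: "finite V \<Longrightarrow> finite (sat V \<phi>)"
  using sat_subset_Pow finite_Pow_iff finite_subset by metis

lemma sat_mem: "T \<subseteq> Pow V \<Longrightarrow> sat V (\<lambda>\<nu>. \<nu> \<in> T) = T"
  unfolding sat_def by auto

lemma equivp_equiv_bf: "equivp (equiv_bf V)"
  unfolding equiv_bf_def by (rule equivp_rtranclp) (auto simp: symp_def pm_step_def)

lemmas equiv_bf_sym = equivp_symp[OF equivp_equiv_bf]
   and equiv_bf_trans = equivp_transp[OF equivp_equiv_bf]

lemma pm_step_imp_equiv_bf: "pm_step V \<phi> \<psi> \<Longrightarrow> equiv_bf V \<phi> \<psi>"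
  unfolding equiv_bf_def by (rule r_into_rtranclp)

lemma equiv_bf_add_pair:
  assumes "\<nu> \<subseteq> V" "l \<in> V" "\<nu> \<notin> sat V \<phi>" "flip \<nu> l \<notin> sat V \<phi>"
  shows "equiv_bf V \<phi> (\<lambda>x. x \<in> sat V \<phi> \<union> {\<nu>, flip \<nu> l})" (is "equiv_bf V \<phi> ?\<psi>")
proof -
  have "sat V ?\<psi> = sat V \<phi> \<union> {\<nu>, flip \<nu> l}"
    using assms sat_subset_Pow[of V \<phi>] flip_subset[OF assms(1,2)] by (intro sat_mem) auto
  with assms have "plus_step V \<phi> \<nu> l ?\<psi>"
    unfolding plus_step_def by simp
  then have "pm_step V \<phi> ?\<psi>"
    unfolding pm_step_def by blast
  then show ?thesis
    by (rule pm_step_imp_equiv_bf)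
qed

lemma equiv_bf_remove_pair:
  assumes "\<nu> \<in> sat V \<phi>" "flip \<nu> l \<in> sat V \<phi>" "l \<in> V"
  shows "equiv_bf V \<phi> (\<lambda>x. x \<in> sat V \<phi> - {\<nu>, flip \<nu> l})" (is "equiv_bf V \<phi> ?\<psi>")
proof -
  have "sat V ?\<psi> = sat V \<phi> - {\<nu>, flip \<nu> l}"
    using sat_subset_Pow[of V \<phi>] by (intro sat_mem) auto
  with assms have "plus_step V ?\<psi> \<nu> l \<phi>"
    unfolding plus_step_def sat_def by auto
  then have "pm_step V \<phi> ?\<psi>"
    unfolding pm_step_def by blast
  then show ?thesis
    by (rule pm_step_imp_equiv_bf)
qed

lemma eul_plus_step:
  assumes "finite V" "plus_step V \<phi> \<nu> l \<psi>"
  shows "eul V \<psi> = eul V \<phi>"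
proof -
  have \<nu>: "\<nu> \<subseteq> V" "\<nu> \<notin> sat V \<phi>" "flip \<nu> l \<notin> sat V \<phi>"
    and sat_\<psi>: "sat V \<psi> = insert \<nu> (insert (flip \<nu> l) (sat V \<phi>))"
    using assms(2) unfolding plus_step_def by auto
  have "finite \<nu>"
    using \<nu>(1) assms(1) finite_subset by blast
  then have "(-1::int) ^ card \<nu> + (-1) ^ card (flip \<nu> l) = 0"
    by (simp add: neg_one_power_card_flip)
  with \<nu> flip_neq[of \<nu> l] finite_sat[OF assms(1)] show ?thesis
    unfolding eul_def sat_\<psi> by simp
qed

lemma equiv_bf_eul:
  assumes "finite V" "equiv_bf V \<phi> \<psi>"
  shows "eul V \<phi> = eul V \<psi>"
  using assms(2) unfolding equiv_bf_def
proof (induction rule: rtranclp_induct)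
  case (step \<chi> \<psi>)
  then show ?case
    using eul_plus_step[OF assms(1)] unfolding pm_step_def by metis
qed simp

lemma equiv_bf_replace_flip_flip:
  assumes u: "u \<in> sat V \<phi>" and ij: "i \<in> V" "j \<in> V" "i \<noteq> j"
    and w: "w = flip (flip u i) j" "w \<notin> sat V \<phi>"
  shows "equiv_bf V \<phi> (\<lambda>x. x \<in> insert w (sat V \<phi> - {u}))"
proof -
  define S where "S = sat V \<phi>"
  define v where "v = flip u i"
  have "u \<subseteq> V"
    using u unfolding sat_def by auto
  then have v_sub: "v \<subseteq> V" and w_sub: "w \<subseteq> V"
    unfolding w(1) v_def using ij flip_subset by metis+
  have S_sub: "S \<subseteq> Pow V"
    unfolding S_def by (rule sat_subset_Pow)
  have w_flip: "w = flip v j"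
    unfolding w(1) v_def ..
  have "u \<noteq> w"
    using flip_flip_neq[OF ij(3), of u] unfolding w(1) by auto
  have "v \<noteq> w"
    using flip_neq[of v j] unfolding w_flip by auto
  have "u \<noteq> v"
    using flip_neq[of u i] unfolding v_def by auto
  show ?thesis
  proof (cases "v \<in> S")
    case False
    define \<chi> where "\<chi> = (\<lambda>x. x \<in> S \<union> {v, w})"
    have "equiv_bf V \<phi> \<chi>"
      using equiv_bf_add_pair[OF v_sub ij(2)] False w unfolding \<chi>_def S_def w_flip by simp
    moreover have "sat V \<chi> = S \<union> {v, w}"
      unfolding \<chi>_def using S_sub v_sub w_sub by (intro sat_mem) auto
    then have "equiv_bf V \<chi> (\<lambda>x. x \<in> S \<union> {v, w} - {u, v})"
      using equiv_bf_remove_pair[of u V \<chi> i] u ij(1) unfolding S_def v_def by auto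
    moreover have "S \<union> {v, w} - {u, v} = insert w (S - {u})"
      using False \<open>u \<noteq> w\<close> \<open>v \<noteq> w\<close> by auto
    ultimately show ?thesis
      unfolding S_def by (metis equiv_bf_trans)
  next
    case True
    define \<chi> where "\<chi> = (\<lambda>x. x \<in> S - {u, v})"
    have "equiv_bf V \<phi> \<chi>"
      using equiv_bf_remove_pair[OF u, of i] True ij unfolding \<chi>_def S_def v_def by simp
    moreover have "sat V \<chi> = S - {u, v}"
      unfolding \<chi>_def using S_sub by (intro sat_mem) auto
    then have "equiv_bf V \<chi> (\<lambda>x. x \<in> S - {u, v} \<union> {v, w})"
      using equiv_bf_add_pair[OF v_sub ij(2), of \<chi>] w unfolding S_def w_flip by auto
    moreover have "S - {u, v} \<union> {v, w} = insert w (S - {u})"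
      using True \<open>u \<noteq> v\<close> by auto
    ultimately show ?thesis
      unfolding S_def by (metis equiv_bf_trans)
  qed
qed

lemma equiv_bf_drop_two_if_odd_sym_diff:
  assumes "finite V"
  shows "a \<in> sat V \<phi> \<Longrightarrow> b \<in> sat V \<phi> \<Longrightarrow> odd (card (sym_diff a b)) \<Longrightarrow>
    \<exists>\<psi>. equiv_bf V \<phi> \<psi> \<and> card (sat V \<psi>) + 2 = card (sat V \<phi>)"
proof (induction "card (sym_diff a b)" arbitrary: \<phi> a b rule: less_induct)
  case less
  have a: "a \<in> sat V \<phi>" and b: "b \<in> sat V \<phi>" by fact+
  have a_sub: "a \<subseteq> V" and b_sub: "b \<subseteq> V"
    using a b unfolding sat_def by auto
  then have D_sub: "sym_diff a b \<subseteq> V"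
    by auto
  then have fin_D: "finite (sym_diff a b)"
    using assms finite_subset by blast
  have fin_S: "finite (sat V \<phi>)"
    using assms by (rule finite_sat)
  show ?case
  proof (cases "card (sym_diff a b) = 1")
    case True
    then obtain i where D: "sym_diff a b = {i}"
      by (rule card_1_singletonE)
    then have b_flip: "b = flip a i"
      by (rule sym_diff_eq_singleton_imp_flip)
    have "i \<in> V"
      using D D_sub by auto
    then have "equiv_bf V \<phi> (\<lambda>x. x \<in> sat V \<phi> - {a, b})"
      using equiv_bf_remove_pair[OF a, of i] b unfolding b_flip by blast
    moreover have "sat V (\<lambda>x. x \<in> sat V \<phi> - {a, b}) = sat V \<phi> - {a, b}"
      using sat_subset_Pow by (intro sat_mem) blast
    moreover have "card (sat V \<phi> - {a, b}) + 2 = card (sat V \<phi>)"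
    proof -
      have "card {a, b} \<le> card (sat V \<phi>)"
        using a b fin_S by (intro card_mono) auto
      then show ?thesis
        using a b fin_S flip_neq[of a i] unfolding b_flip by (simp add: card_Diff_subset)
    qed
    ultimately show ?thesis
      by (intro exI[of _ "\<lambda>x. x \<in> sat V \<phi> - {a, b}"]) simp
  next
    case False
    then have "\<not> card (sym_diff a b) \<le> Suc 0"
      using less.prems(3) by presburger
    then obtain i j where ij: "i \<in> sym_diff a b" "j \<in> sym_diff a b" "i \<noteq> j"
      using card_le_Suc0_iff_eq[OF fin_D] by blast
    then have ij_V: "i \<in> V" "j \<in> V"
      using D_sub by auto
    define w where "w = flip (flip a i) j"
    have "sym_diff w b = sym_diff a b - {i, j}"
      unfolding w_def sym_diff_flip using ij by (auto simp: flip_def)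
    moreover have "card {i, j} \<le> card (sym_diff a b)"
      using fin_D ij by (intro card_mono) auto
    ultimately have card_D: "card (sym_diff w b) + 2 = card (sym_diff a b)"
      using fin_D ij by (simp add: card_Diff_subset)
    then have smaller: "card (sym_diff w b) < card (sym_diff a b)"
      and odd: "odd (card (sym_diff w b))"
      using less.prems(3) by presburger+
    show ?thesis
    proof (cases "w \<in> sat V \<phi>")
      case True
      then show ?thesis
        using less.hyps[OF smaller True b odd] by blast
    next
      case False
      define \<phi>' where "\<phi>' = (\<lambda>x. x \<in> insert w (sat V \<phi> - {a}))"
      have equiv: "equiv_bf V \<phi> \<phi>'"
        unfolding \<phi>'_def using equiv_bf_replace_flip_flip[OF a ij_V ij(3) w_def False] .
      have "w \<subseteq> V"
        unfolding w_def using a_sub ij_V by (intro flip_subset)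
      then have sat_\<phi>': "sat V \<phi>' = insert w (sat V \<phi> - {a})"
        unfolding \<phi>'_def using sat_subset_Pow by (intro sat_mem) blast
      moreover have "card (sat V \<phi>) > 0"
        using a fin_S by (auto simp: card_gt_0_iff)
      ultimately have card_sat: "card (sat V \<phi>') = card (sat V \<phi>)"
        using a False fin_S by simp
      have "a \<noteq> b"
        using ij by auto
      with sat_\<phi>' b have "w \<in> sat V \<phi>'" "b \<in> sat V \<phi>'"
        by auto
      then obtain \<psi> where "equiv_bf V \<phi>' \<psi>" "card (sat V \<psi>) + 2 = card (sat V \<phi>')"
        using less.hyps[OF smaller _ _ odd] by blast
      then show ?thesis
        using equiv_bf_trans[OF equiv] card_sat by auto
    qed
  qed
qed

lemma eul_eq_0_obtains_odd_sym_diff: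
  assumes "finite V" "eul V \<phi> = 0" "sat V \<phi> \<noteq> {}"
  obtains a b where "a \<in> sat V \<phi>" "b \<in> sat V \<phi>" "odd (card (sym_diff a b))"
proof -
  have "\<exists>a\<in>sat V \<phi>. \<exists>b\<in>sat V \<phi>. odd (card (sym_diff a b))"
  proof (rule ccontr)
    assume "\<not> ?thesis"
    then have even: "even (card (sym_diff a b))" if "a \<in> sat V \<phi>" "b \<in> sat V \<phi>" for a b
      using that by blast
    obtain a where a: "a \<in> sat V \<phi>"
      using assms(3) by blast
    have fin: "finite \<nu>" if "\<nu> \<in> sat V \<phi>" for \<nu>
      using that assms(1) finite_subset unfolding sat_def by blast
    have "(-1::int) ^ card \<nu> = (-1) ^ card a" if "\<nu> \<in> sat V \<phi>" for \<nu>
    proof -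
      have "even (card \<nu> + card a)"
        using even[OF that a] even_card_sym_diff_iff[OF fin[OF that] fin[OF a]] by simp
      then show ?thesis
        by (cases "even (card a)") simp_all
    qed
    then have "eul V \<phi> = of_nat (card (sat V \<phi>)) * (-1) ^ card a"
      unfolding eul_def by simp
    moreover have "card (sat V \<phi>) > 0"
      using a finite_sat[OF assms(1)] by (auto simp: card_gt_0_iff)
    ultimately show False
      using assms(2) by simp
  qed
  then show thesis
    using that by blast
qed

lemma equiv_bf_bot_if_sat_empty:
  assumes "l \<in> V" "sat V \<phi> = {}"
  shows "equiv_bf V \<phi> bot_fun"
proof -
  have "sat V bot_fun = {}"
    unfolding sat_def bot_fun_def by simp
  then have bot: "equiv_bf V bot_fun (\<lambda>x. x \<in> {} \<union> {{}, flip {} l})"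
    using equiv_bf_add_pair[of "{}" V l bot_fun] assms(1) by simp
  have "equiv_bf V \<phi> (\<lambda>x. x \<in> {} \<union> {{}, flip {} l})"
    using equiv_bf_add_pair[of "{}" V l \<phi>] assms unfolding assms(2) by simp
  then show ?thesis
    using equiv_bf_sym[OF bot] by (rule equiv_bf_trans)
qed

lemma equiv_bf_bot_if_eul_eq_0:
  assumes "finite V" "V \<noteq> {}"
  shows "eul V \<phi> = 0 \<Longrightarrow> equiv_bf V \<phi> bot_fun"
proof (induction "card (sat V \<phi>)" arbitrary: \<phi> rule: less_induct)
  case less
  show ?case
  proof (cases "sat V \<phi> = {}")
    case True
    obtain l where "l \<in> V"
      using assms(2) by blast
    then show ?thesis
      using True by (rule equiv_bf_bot_if_sat_empty)
  next
    case False
    then obtain a b where ab: "a \<in> sat V \<phi>" "b \<in> sat V \<phi>" "odd (card (sym_diff a b))"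
      using eul_eq_0_obtains_odd_sym_diff[OF assms(1) less.prems] by blast
    then obtain \<psi> where \<psi>: "equiv_bf V \<phi> \<psi>" "card (sat V \<psi>) + 2 = card (sat V \<phi>)"
      using equiv_bf_drop_two_if_odd_sym_diff[OF assms(1) ab] by blast
    have "eul V \<psi> = 0"
      using equiv_bf_eul[OF assms(1) \<psi>(1)] less.prems by simp
    moreover have "card (sat V \<psi>) < card (sat V \<phi>)"
      using \<psi>(2) by simp
    ultimately have "equiv_bf V \<psi> bot_fun"
      using less.hyps by blast
    with \<psi>(1) show ?thesis
      by (rule equiv_bf_trans)
  qed
qed

theorem proposition5p9:
  fixes k :: nat and \<phi> :: "nat set \<Rightarrow> bool"
  assumes "k \<ge> 1"
    and "eul {0..k} \<phi> = 0"
  shows "equiv_bf {0..k} \<phi> bot_fun"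
  \<comment> \<open>only V \<noteq> {} is needed, so k = 0 would do as well\<close>
  using equiv_bf_bot_if_eul_eq_0[of "{0..k}" \<phi>] assms(2) by simp

end
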